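(* Let $X$ be a real reflexive Banach space and let $\Omega_1,\Omega_2\subset X$ be closed convex sets such that $\operatorname{int}(\Omega_1-\Omega_2)\neq\emptyset$ and $0\in\operatorname{core}(\Omega_1-\Omega_2)$. Then for every $\bar x\in\Omega_1\cap\Omega_2$ there exists a bounded convex neighborhood $V$ of $\bar x$ such that $0\in\operatorname{int}\big(\Omega_1-(\Omega_2\cap V)\big)$.
   Context: For sets $A,B$, $A-B=\{a-b\mid a\in A,b\in B\}$; $\operatorname{int}$ is the topological interior. The (algebraic) core of a set $\Omega\subset X$ is $\operatorname{core}\Omega=\{x\in\Omega\mid \forall v\in X\ \exists\gamma>0 \text{ such that } x+tv\in\Omega \text{ whenever } |t|<\gamma\}$. *)

theory Defs
  imports "HOL-Analysis.Analysis"
begin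

definition set_diff_mink :: "'a::ab_group_add set \<Rightarrow> 'a set \<Rightarrow> 'a set" where
  "set_diff_mink A B = {a - b | a b. a \<in> A \<and> b \<in> B}"

definition core :: "'a::real_vector set \<Rightarrow> 'a set" where
  "core \<Omega> = {x \<in> \<Omega>. \<forall>v. \<exists>\<gamma>>0. \<forall>t::real. \<bar>t\<bar> < \<gamma> \<longrightarrow> x + t *\<^sub>R v \<in> \<Omega>}"

text \<open>Reflexivity: the canonical embedding of X into its bidual is surjective,
  i.e. every continuous linear functional on the dual X* is evaluation at some x.\<close>
definition reflexive_space :: "'a::real_normed_vector itself \<Rightarrow> bool" where
  "reflexive_space _ \<longleftrightarrow>
     (\<forall>\<phi> :: ('a \<Rightarrow>\<^sub>L real) \<Rightarrow>\<^sub>L real. \<exists>x::'a. \<forall>f. blinfun_apply \<phi> f = blinfun_apply f x)"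

end

theory Submission
  imports Defs
begin

text \<open>Localize with the closed unit ball \<open>V\<close> around \<open>xbar\<close> and let \<open>K\<close> be the difference of
  \<open>\<Omega>\<^sub>1 \<inter> V\<close> and \<open>\<Omega>\<^sub>2 \<inter> V\<close>. Moving towards \<open>xbar\<close> along segments inside the convex sets turns
  \<open>0 \<in> core (\<Omega>\<^sub>1 - \<Omega>\<^sub>2)\<close> into: \<open>K\<close> is convex and absorbing. Baire's theorem for the closed
  sets \<open>n \<cdot> closure K\<close> then puts \<open>0\<close> into the interior of \<open>closure K\<close>. Finally, as in
  Robinson's lemma, the closure can be removed at the cost of halving the radius: a point of the
  small ball is the sum of a series \<open>\<Sum> 2\<^sup>-\<^sup>k\<^sup>-\<^sup>1 (a\<^sub>k - b\<^sub>k)\<close> of successive approximations, which converges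
  by completeness and stays in the closed bounded convex translates of \<open>\<Omega>\<^sub>i \<inter> V\<close>.\<close>

lemma convex_set_diff_mink:
  assumes "convex S" "convex T"
  shows "convex (set_diff_mink S T)"
proof -
  have "set_diff_mink S T = (\<Union>x\<in>S. \<Union>y\<in>T. {x - y})"
    unfolding set_diff_mink_def by auto
  then show ?thesis using convex_differences[OF assms] by simp
qed

lemma set_diff_mink_translation:
  "set_diff_mink ((\<lambda>y. y - x) ` A) ((\<lambda>y. y - x) ` B) = set_diff_mink A B"
proof (intro set_eqI iffI)
  fix z assume "z \<in> set_diff_mink ((\<lambda>y. y - x) ` A) ((\<lambda>y. y - x) ` B)"
  then obtain a b where "a \<in> A" "b \<in> B" "z = (a - x) - (b - x)"
    unfolding set_diff_mink_def by blast
  then show "z \<in> set_diff_mink A B" unfolding set_diff_mink_def by auto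
next
  fix z assume "z \<in> set_diff_mink A B"
  then obtain a b where "a \<in> A" "b \<in> B" "z = (a - x) - (b - x)"
    unfolding set_diff_mink_def by auto
  then show "z \<in> set_diff_mink ((\<lambda>y. y - x) ` A) ((\<lambda>y. y - x) ` B)"
    unfolding set_diff_mink_def by blast
qed

lemma set_diff_mink_mono:
  "A \<subseteq> A' \<Longrightarrow> B \<subseteq> B' \<Longrightarrow> set_diff_mink A B \<subseteq> set_diff_mink A' B'"
  unfolding set_diff_mink_def by blast

lemma sum_scaleR_mem_convex_zero:
  fixes C :: "'a::real_vector set"
  assumes "convex C" "0 \<in> C" "finite I"
    and "\<And>i. i \<in> I \<Longrightarrow> 0 \<le> w i" "sum w I \<le> 1" "\<And>i. i \<in> I \<Longrightarrow> x i \<in> C"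
  shows "(\<Sum>i\<in>I. w i *\<^sub>R x i) \<in> C"
proof (cases "sum w I = 0")
  case True
  then have "\<forall>i\<in>I. w i = 0" using sum_nonneg_eq_0_iff[OF assms(3)] assms(4) by blast
  then show ?thesis using assms(2) by simp
next
  case False
  define s where "s = sum w I"
  have "s > 0" using False sum_nonneg[of I w] assms(4) unfolding s_def by fastforce
  have "(\<Sum>i\<in>I. (w i / s) *\<^sub>R x i) \<in> C"
    using \<open>s > 0\<close> assms by (intro convex_sum) (auto simp: sum_divide_distrib[symmetric] s_def)
  from convexD[OF assms(1) this assms(2), of s "1 - s"]
  show ?thesis using \<open>s > 0\<close> assms(5) by (simp add: s_def scaleR_sum_right)
qed

lemma summable_half_powers_scaleR:
  fixes c :: "nat \<Rightarrow> 'a::banach"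
  assumes "bounded (range c)"
  shows "summable (\<lambda>k. (1/2::real)^Suc k *\<^sub>R c k)"
proof -
  obtain M where "\<And>k. norm (c k) \<le> M" using assms by (auto simp: bounded_iff)
  then have "norm ((1/2::real)^Suc k *\<^sub>R c k) \<le> M * (1/2)^Suc k" for k
    by (simp add: mult.commute)
  moreover have "summable (\<lambda>k. M * (1/2::real)^Suc k)"
    by (intro summable_mult summable_geometric_iff[THEN iffD2] summable_mult2) simp
  ultimately show ?thesis by (blast intro: summable_comparison_test')
qed

lemma suminf_half_powers_scaleR_mem:
  fixes C :: "'a::banach set"
  assumes "closed C" "convex C" "0 \<in> C" "bounded C" "\<And>k. c k \<in> C"
  shows "(\<Sum>k. (1/2::real)^Suc k *\<^sub>R c k) \<in> C"
proof -
  have "bounded (range c)" using assms(4,5) by (meson bounded_subset image_subsetI)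
  then have lim: "(\<lambda>n. \<Sum>k<n. (1/2::real)^Suc k *\<^sub>R c k) \<longlonglongrightarrow> (\<Sum>k. (1/2::real)^Suc k *\<^sub>R c k)"
    using summable_LIMSEQ summable_half_powers_scaleR by blast
  have "(\<Sum>k<n. (1/2::real)^Suc k) = 1 - (1/2)^n" for n
    by (induction n) (auto simp: field_simps)
  then have "(\<Sum>k<n. (1/2::real)^Suc k *\<^sub>R c k) \<in> C" for n
    using assms(2,3,5) by (intro sum_scaleR_mem_convex_zero) auto
  with closed_sequentially[OF assms(1) _ lim] show ?thesis by blast
qed

lemma sums_half_powers_of_approximation:
  fixes y :: "'a::real_normed_vector"
  assumes approx: "\<And>w. w \<in> ball 0 \<delta> \<Longrightarrow> \<exists>d\<in>D. w - d \<in> ball 0 (\<delta>/2)"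
    and y: "2 *\<^sub>R y \<in> ball 0 \<delta>"
  shows "\<exists>d. (\<forall>k. d k \<in> D) \<and> (\<lambda>k. (1/2::real)^Suc k *\<^sub>R d k) sums y"
proof -
  obtain g where g: "\<And>w. w \<in> ball 0 \<delta> \<Longrightarrow> g w \<in> D \<and> w - g w \<in> ball 0 (\<delta>/2)"
    using approx by metis
  \<comment> \<open>Approximate the residual up to \<open>\<delta>/2\<close> and rescale it by 2, so it stays in \<open>ball 0 \<delta>\<close>.\<close>
  define r where "r = rec_nat (2 *\<^sub>R y) (\<lambda>_ w. 2 *\<^sub>R (w - g w))"
  define d where "d n = g (r n)" for n
  have r_Suc: "r (Suc n) = 2 *\<^sub>R (r n - d n)" for n
    by (simp add: r_def d_def)
  have r_ball: "r n \<in> ball 0 \<delta>" for n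
  proof (induction n)
    case 0 show ?case using y by (simp add: r_def)
  next
    case (Suc n) then show ?case using g[OF Suc] by (simp add: r_Suc d_def)
  qed
  have y_eq: "y = (\<Sum>k<n. (1/2::real)^Suc k *\<^sub>R d k) + (1/2::real)^Suc n *\<^sub>R r n" for n
  proof (induction n)
    case 0 show ?case by (simp add: r_def)
  next
    case (Suc n)
    have "(1/2::real)^Suc (Suc n) *\<^sub>R r (Suc n) = (1/2::real)^Suc n *\<^sub>R (r n - d n)"
      by (simp add: r_Suc)
    with Suc show ?case by (simp add: scaleR_diff_right)
  qed
  have "(\<lambda>n. (1/2::real)^Suc n *\<^sub>R r n) \<longlonglongrightarrow> 0"
  proof (rule Lim_null_comparison)
    show "\<forall>\<^sub>F n in sequentially. norm ((1/2::real)^Suc n *\<^sub>R r n) \<le> \<delta> * (1/2)^Suc n"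
      using r_ball by (intro always_eventually allI) (auto simp: less_imp_le mult.commute)
    show "(\<lambda>n. \<delta> * (1/2::real)^Suc n) \<longlonglongrightarrow> 0"
      by (intro tendsto_mult_right_zero LIMSEQ_Suc) (simp add: LIMSEQ_realpow_zero)
  qed
  then have "(\<lambda>n. y - (1/2::real)^Suc n *\<^sub>R r n) \<longlonglongrightarrow> y - 0"
    by (intro tendsto_diff tendsto_const)
  moreover have "y - (1/2::real)^Suc n *\<^sub>R r n = (\<Sum>k<n. (1/2::real)^Suc k *\<^sub>R d k)" for n
    by (subst y_eq[of n]) simp
  ultimately have "(\<lambda>k. (1/2::real)^Suc k *\<^sub>R d k) sums y"
    by (simp add: sums_def)
  moreover have "d k \<in> D" for k using g[OF r_ball] by (simp add: d_def)
  ultimately show ?thesis by blast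
qed

lemma ball_subset_set_diff_mink_of_closure:
  fixes A B :: "'a::banach set"
  assumes A: "closed A" "convex A" "0 \<in> A" "bounded A"
    and B: "closed B" "convex B" "0 \<in> B" "bounded B"
    and dense: "ball 0 \<delta> \<subseteq> closure (set_diff_mink A B)"
  shows "ball 0 (\<delta>/2) \<subseteq> set_diff_mink A B"
proof
  fix y :: 'a assume y: "y \<in> ball 0 (\<delta>/2)"
  have approx: "\<exists>d\<in>set_diff_mink A B. w - d \<in> ball 0 (\<delta>/2)" if "w \<in> ball 0 \<delta>" for w
  proof -
    have "norm w < \<delta>" using that by simp
    then have "\<delta>/2 > 0" using norm_ge_zero[of w] by linarith
    moreover have "w \<in> closure (set_diff_mink A B)" using that dense by blast
    ultimately obtain d where "d \<in> set_diff_mink A B" "dist d w < \<delta>/2"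
      unfolding closure_approachable by blast
    then show ?thesis by (auto simp: dist_norm norm_minus_commute)
  qed
  have "2 *\<^sub>R y \<in> ball 0 \<delta>" using y by simp
  from sums_half_powers_of_approximation[OF approx this]
  obtain d where d: "\<And>k. d k \<in> set_diff_mink A B"
    and sums: "(\<lambda>k. (1/2::real)^Suc k *\<^sub>R d k) sums y"
    by blast
  have "\<forall>k. \<exists>a b. a \<in> A \<and> b \<in> B \<and> d k = a - b"
    using d unfolding set_diff_mink_def by blast
  then obtain a b where a: "\<And>k. a k \<in> A" and b: "\<And>k. b k \<in> B" and d_eq: "\<And>k. d k = a k - b k"
    by metis
  have "bounded (range a)" "bounded (range b)"
    using a b A(4) B(4) by (meson bounded_subset image_subsetI)+
  from sums_diff[OF this[THEN summable_half_powers_scaleR, THEN summable_sums]]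
  have "(\<lambda>k. (1/2::real)^Suc k *\<^sub>R d k) sums
      ((\<Sum>k. (1/2::real)^Suc k *\<^sub>R a k) - (\<Sum>k. (1/2::real)^Suc k *\<^sub>R b k))"
    by (simp add: d_eq scaleR_diff_right)
  with sums have "y = (\<Sum>k. (1/2::real)^Suc k *\<^sub>R a k) - (\<Sum>k. (1/2::real)^Suc k *\<^sub>R b k)"
    by (rule sums_unique2)
  then show "y \<in> set_diff_mink A B"
    using suminf_half_powers_scaleR_mem[of A a, OF A a] suminf_half_powers_scaleR_mem[of B b, OF B b]
    unfolding set_diff_mink_def by blast
qed

lemma Baire_banach_interior_nonempty:
  fixes F :: "nat \<Rightarrow> 'a::banach set"
  assumes "\<And>n. closed (F n)" "(\<Union>n. F n) = UNIV"
  shows "\<exists>n. interior (F n) \<noteq> {}"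
proof (rule ccontr)
  assume "\<not> ?thesis"
  then have "euclidean interior_of \<Union>(range F) = {}"
    using assms(1) completely_metrizable_space_euclidean
    by (intro Baire_category_alt) (auto simp: interior_of_def interior_def)
  then show False using assms(2) by (simp add: interior_of_def) blast
qed

lemma ball_subset_convex_shrink:
  fixes C :: "'a::real_normed_vector set"
  assumes "convex C" "ball p \<rho> \<subseteq> C" "q \<in> C" "0 < \<theta>" "\<theta> \<le> 1"
  shows "ball ((1 - \<theta>) *\<^sub>R q + \<theta> *\<^sub>R p) (\<theta> * \<rho>) \<subseteq> C"
proof
  fix w assume w: "w \<in> ball ((1 - \<theta>) *\<^sub>R q + \<theta> *\<^sub>R p) (\<theta> * \<rho>)"
  define z where "z = p + (1/\<theta>) *\<^sub>R (w - ((1 - \<theta>) *\<^sub>R q + \<theta> *\<^sub>R p))"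
  have "dist p z = (1/\<theta>) * dist ((1 - \<theta>) *\<^sub>R q + \<theta> *\<^sub>R p) w"
    using assms(4) by (simp add: z_def dist_norm norm_minus_commute)
  then have "\<theta> * dist p z < \<theta> * \<rho>" using w assms(4) by simp
  then have "z \<in> C" using assms(2,4) by auto
  moreover have "w = (1 - \<theta>) *\<^sub>R q + \<theta> *\<^sub>R z"
    using assms(4) by (simp add: z_def algebra_simps)
  ultimately show "w \<in> C" using convexD[OF assms(1) assms(3)] assms(4,5) by simp
qed

lemma ball_subset_closure_absorbing_convex:
  fixes K :: "'a::banach set"
  assumes "convex K" and absorbing: "\<And>v. \<exists>t>0. t *\<^sub>R v \<in> K"
  shows "\<exists>p \<rho>. \<rho> > 0 \<and> ball p \<rho> \<subseteq> closure K"
proof -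
  have "0 \<in> K" using absorbing[of 0] by auto
  define F where "F n = (\<lambda>x. (1 / real (Suc n)) *\<^sub>R x) -` closure K" for n
  have "\<exists>n. interior (F n) \<noteq> {}"
  proof (rule Baire_banach_interior_nonempty)
    show "closed (F n)" for n
      unfolding F_def by (intro closed_vimage closed_closure continuous_intros)
    show "(\<Union>n. F n) = UNIV"
    proof (intro set_eqI iffI)
      fix v :: 'a
      obtain t where t: "t > 0" "t *\<^sub>R v \<in> K" using absorbing by blast
      obtain n where "1 / t < real n" using reals_Archimedean2 by blast
      then have "1 / (real (Suc n) * t) \<le> 1" using t(1) by (simp add: field_simps)
      then have "(1 / (real (Suc n) * t)) *\<^sub>R (t *\<^sub>R v) \<in> K"
        using convexD[OF assms(1) t(2) \<open>0 \<in> K\<close>, of "1 / (real (Suc n) * t)"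
            "1 - 1 / (real (Suc n) * t)"] t(1) by simp
      then have "v \<in> F n" using t(1) closure_subset unfolding F_def by auto
      then show "v \<in> (\<Union>n. F n)" by blast
    qed simp
  qed
  then obtain n u r where "r > 0" "ball u r \<subseteq> F n"
    by (metis all_not_in_conv mem_interior)
  then have "(\<lambda>x. (1 / real (Suc n)) *\<^sub>R x) ` ball u r \<subseteq> closure K"
    unfolding F_def by blast
  then have "ball ((1 / real (Suc n)) *\<^sub>R u) (r / real (Suc n)) \<subseteq> closure K"
    by (subst (asm) ball_scale) simp_all
  then show ?thesis
    using \<open>r > 0\<close> by (meson divide_pos_pos of_nat_0_less_iff zero_less_Suc)
qed

lemma zero_in_interior_closure_absorbing_convex:
  fixes K :: "'a::banach set"
  assumes "convex K" and absorbing: "\<And>v. \<exists>t>0. t *\<^sub>R v \<in> K"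
  shows "0 \<in> interior (closure K)"
proof -
  obtain p \<rho> where p: "\<rho> > 0" "ball p \<rho> \<subseteq> closure K"
    using ball_subset_closure_absorbing_convex[OF assms] by blast
  obtain t where t: "t > 0" "t *\<^sub>R (- p) \<in> K" using absorbing by blast
  \<comment> \<open>\<open>0\<close> divides the segment from \<open>t(-p)\<close> to \<open>p\<close> in the ratio \<open>1 : t\<close>.\<close>
  have "ball ((1 - t/(1+t)) *\<^sub>R (t *\<^sub>R (- p)) + (t/(1+t)) *\<^sub>R p) ((t/(1+t)) * \<rho>) \<subseteq> closure K"
    using t closure_subset by (intro ball_subset_convex_shrink convex_closure assms(1) p(2)) auto
  moreover have "(1 - t/(1+t)) *\<^sub>R (t *\<^sub>R (- p)) + (t/(1+t)) *\<^sub>R p = 0"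
    using t(1) by (simp add: field_simps)
  ultimately show ?thesis
    using t(1) p(1) by (metis centre_in_ball interior_maximal open_ball subsetD
        zero_less_divide_iff mult_pos_pos add_pos_pos zero_less_one)
qed

lemma convex_segment_eventually_in_cball:
  fixes S :: "'a::real_normed_vector set"
  assumes "convex S" "x \<in> S" "a \<in> S" "r > 0"
  shows "\<exists>l>0. \<forall>s. 0 < s \<and> s \<le> l \<longrightarrow> x + s *\<^sub>R (a - x) \<in> S \<inter> cball x r"
proof (intro exI[of _ "min 1 (r / (norm (a - x) + 1))"] conjI allI impI)
  show "0 < min 1 (r / (norm (a - x) + 1))"
    using assms(4) by (simp add: add_nonneg_pos)
  fix s assume s: "0 < s \<and> s \<le> min 1 (r / (norm (a - x) + 1))"
  have "x + s *\<^sub>R (a - x) = (1 - s) *\<^sub>R x + s *\<^sub>R a" by (simp add: algebra_simps)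
  then have "x + s *\<^sub>R (a - x) \<in> S"
    using convexD[OF assms(1-3), of "1 - s" s] s by simp
  moreover have "s * norm (a - x) \<le> r"
  proof -
    have "s * (norm (a - x) + 1) \<le> r"
      using s by (simp add: le_divide_eq add_nonneg_pos)
    then show ?thesis using s by (simp add: distrib_left)
  qed
  ultimately show "x + s *\<^sub>R (a - x) \<in> S \<inter> cball x r"
    using s by (simp add: dist_norm)
qed

lemma absorbing_set_diff_mink_cball:
  fixes \<Omega>1 \<Omega>2 :: "'a::real_normed_vector set"
  assumes "convex \<Omega>1" "convex \<Omega>2" "x \<in> \<Omega>1 \<inter> \<Omega>2" "r > 0"
    and "0 \<in> core (set_diff_mink \<Omega>1 \<Omega>2)"
  shows "\<exists>t>0. t *\<^sub>R v \<in> set_diff_mink (\<Omega>1 \<inter> cball x r) (\<Omega>2 \<inter> cball x r)"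
proof -
  obtain \<gamma> where "\<gamma> > 0" and "\<And>t. \<bar>t\<bar> < \<gamma> \<Longrightarrow> t *\<^sub>R v \<in> set_diff_mink \<Omega>1 \<Omega>2"
    using assms(5) unfolding core_def by force
  then have "(\<gamma>/2) *\<^sub>R v \<in> set_diff_mink \<Omega>1 \<Omega>2" by simp
  then obtain a b where ab: "a \<in> \<Omega>1" "b \<in> \<Omega>2" "(\<gamma>/2) *\<^sub>R v = a - b"
    unfolding set_diff_mink_def by blast
  obtain l1 where l1: "l1 > 0" "\<And>s. 0 < s \<and> s \<le> l1 \<Longrightarrow> x + s *\<^sub>R (a - x) \<in> \<Omega>1 \<inter> cball x r"
    using convex_segment_eventually_in_cball[OF assms(1) _ ab(1) assms(4)] assms(3) by blast
  obtain l2 where l2: "l2 > 0" "\<And>s. 0 < s \<and> s \<le> l2 \<Longrightarrow> x + s *\<^sub>R (b - x) \<in> \<Omega>2 \<inter> cball x r"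
    using convex_segment_eventually_in_cball[OF assms(2) _ ab(2) assms(4)] assms(3) by blast
  define s where "s = min l1 l2"
  have "s > 0" using l1 l2 by (simp add: s_def)
  have "x + s *\<^sub>R (a - x) \<in> \<Omega>1 \<inter> cball x r" "x + s *\<^sub>R (b - x) \<in> \<Omega>2 \<inter> cball x r"
    using l1(2) l2(2) \<open>s > 0\<close> by (simp_all add: s_def)
  then have "(x + s *\<^sub>R (a - x)) - (x + s *\<^sub>R (b - x)) \<in> set_diff_mink (\<Omega>1 \<inter> cball x r) (\<Omega>2 \<inter> cball x r)"
    unfolding set_diff_mink_def by blast
  moreover have "(x + s *\<^sub>R (a - x)) - (x + s *\<^sub>R (b - x)) = (s * (\<gamma>/2)) *\<^sub>R v"
  proof -
    have "(x + s *\<^sub>R (a - x)) - (x + s *\<^sub>R (b - x)) = s *\<^sub>R (a - b)" by (simp add: algebra_simps)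
    then show ?thesis by (simp add: ab(3)[symmetric])
  qed
  ultimately show ?thesis using \<open>s > 0\<close> \<open>\<gamma> > 0\<close> by (metis half_gt_zero mult_pos_pos)
qed

theorem proposition3p3:
  fixes \<Omega>1 \<Omega>2 :: "'a::banach set"
  assumes "reflexive_space TYPE('a)"
    and "closed \<Omega>1" and "convex \<Omega>1" and "closed \<Omega>2" and "convex \<Omega>2"
    and "interior (set_diff_mink \<Omega>1 \<Omega>2) \<noteq> {}"
    and "0 \<in> core (set_diff_mink \<Omega>1 \<Omega>2)"
  shows "\<forall>xbar \<in> \<Omega>1 \<inter> \<Omega>2. \<exists>V. bounded V \<and> convex V \<and> xbar \<in> interior V \<and>
           0 \<in> interior (set_diff_mink \<Omega>1 (\<Omega>2 \<inter> V))"
proof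
  fix xbar assume xbar: "xbar \<in> \<Omega>1 \<inter> \<Omega>2"
  define V where "V = cball xbar 1"
  define A where "A = (\<lambda>y. y - xbar) ` (\<Omega>1 \<inter> V)"
  define B where "B = (\<lambda>y. y - xbar) ` (\<Omega>2 \<inter> V)"
  have A: "closed A" "convex A" "0 \<in> A" "bounded A" and B: "closed B" "convex B" "0 \<in> B" "bounded B"
    using xbar assms(2-5) unfolding A_def B_def V_def
    by (auto intro!: closed_translation_subtract convex_translation_subtract bounded_translation_minus
        convex_Int simp: bounded_Int)
  have "0 \<in> interior (closure (set_diff_mink A B))"
    using absorbing_set_diff_mink_cball[OF assms(3,5) xbar zero_less_one assms(7)]
    by (intro zero_in_interior_closure_absorbing_convex convex_set_diff_mink A(2) B(2))
      (simp add: A_def B_def V_def set_diff_mink_translation)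
  then obtain \<delta> where "\<delta> > 0" "ball 0 \<delta> \<subseteq> closure (set_diff_mink A B)"
    using mem_interior by blast
  then have "ball 0 (\<delta>/2) \<subseteq> set_diff_mink (\<Omega>1 \<inter> V) (\<Omega>2 \<inter> V)"
    using ball_subset_set_diff_mink_of_closure[OF A B] by (simp add: A_def B_def set_diff_mink_translation)
  also have "\<dots> \<subseteq> set_diff_mink \<Omega>1 (\<Omega>2 \<inter> V)"
    by (rule set_diff_mink_mono) auto
  finally have "ball 0 (\<delta>/2) \<subseteq> set_diff_mink \<Omega>1 (\<Omega>2 \<inter> V)" .
  then have "0 \<in> interior (set_diff_mink \<Omega>1 (\<Omega>2 \<inter> V))"
    using \<open>\<delta> > 0\<close> by (meson centre_in_ball half_gt_zero interior_maximal open_ball subsetD)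
  moreover have "xbar \<in> interior V"
    unfolding V_def by (meson ball_subset_cball centre_in_ball interior_maximal open_ball subsetD zero_less_one)
  ultimately show "\<exists>V. bounded V \<and> convex V \<and> xbar \<in> interior V \<and>
      0 \<in> interior (set_diff_mink \<Omega>1 (\<Omega>2 \<inter> V))"
    unfolding V_def by blast
qed

end
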